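(* Let $\mathbb{K}$ be a field, $k\geq 1$, and let $\mathcal{C}\subseteq\mathbb{K}^{2k}$ be a self-dual linear code (so $\dim\mathcal{C}=k$). Then $$\dim_{\mathbb{K}}\big(\mathcal{C}^{(2)}\big)=2k-\mathrm{nb}(\mathcal{C}).$$
   Context: A linear code of length $n$ over $\mathbb{K}$ is a $\mathbb{K}$-subspace $\mathcal{C}\subseteq\mathbb{K}^n$; it is self-dual if $\mathcal{C}=\mathcal{C}^\perp$, where $\mathcal{C}^\perp=\{x\in\mathbb{K}^n:\sum_i x_ic_i=0\ \forall c\in\mathcal{C}\}$. The Schur (componentwise) product of $v,w\in\mathbb{K}^n$ is $v\ast w=(v_1w_1,\dots,v_nw_n)$, and the Schur square $\mathcal{C}^{(2)}$ is the $\mathbb{K}$-span of all $c\ast c'$ with $c,c'\in\mathcal{C}$. Two codes are equivalent if one is obtained from the other by a permutation of coordinates. For codes $\mathcal{C}_1\subseteq\mathbb{K}^{n_1}$, $\mathcal{C}_2\subseteq\mathbb{K}^{n_2}$, the direct sum is $\mathcal{C}_1\oplus\mathcal{C}_2=\{(c_1,c_2):c_i\in\mathcal{C}_i\}\subseteq\mathbb{K}^{n_1+n_2}$. A code is decomposable if it is equivalent to the direct sum of two nontrivial (nonzero, positive-length) codes, and indecomposable otherwise. Every code is equivalent to a direct sum of indecomposable codes (blocks), and the number of blocks is an invariant of the code, denoted $\mathrm{nb}(\mathcal{C})$. *)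

theory Defs
  imports Main "HOL.Vector_Spaces" "HOL-Library.Function_Algebras"
begin

text \<open>Vectors of K^n are represented as functions nat => K vanishing outside {..<n};
  a code on a finite coordinate set S is a set of functions vanishing outside S.\<close>

definition fscale :: "'a::field \<Rightarrow> (nat \<Rightarrow> 'a) \<Rightarrow> (nat \<Rightarrow> 'a)" where
  "fscale c x = (\<lambda>i. c * x i)"

interpretation fvec: vector_space "fscale :: 'a::field \<Rightarrow> (nat \<Rightarrow> 'a) \<Rightarrow> (nat \<Rightarrow> 'a)"
  by unfold_locales (auto simp: fscale_def algebra_simps fun_eq_iff)

definition vecs :: "nat \<Rightarrow> (nat \<Rightarrow> 'a::zero) set" where
  "vecs n = {x. \<forall>i\<ge>n. x i = 0}"

definition lin_code :: "nat \<Rightarrow> (nat \<Rightarrow> 'a::field) set \<Rightarrow> bool" where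
  "lin_code n C \<longleftrightarrow> C \<subseteq> vecs n \<and> fvec.subspace C"

definition dual_code :: "nat \<Rightarrow> (nat \<Rightarrow> 'a::field) set \<Rightarrow> (nat \<Rightarrow> 'a) set" where
  "dual_code n C = {x \<in> vecs n. \<forall>c\<in>C. (\<Sum>i<n. x i * c i) = 0}"

definition self_dual :: "nat \<Rightarrow> (nat \<Rightarrow> 'a::field) set \<Rightarrow> bool" where
  "self_dual n C \<longleftrightarrow> lin_code n C \<and> C = dual_code n C"

definition schur :: "(nat \<Rightarrow> 'a::field) \<Rightarrow> (nat \<Rightarrow> 'a) \<Rightarrow> (nat \<Rightarrow> 'a)" where
  "schur v w = (\<lambda>i. v i * w i)"

definition schur_square :: "(nat \<Rightarrow> 'a::field) set \<Rightarrow> (nat \<Rightarrow> 'a) set" where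
  "schur_square C = fvec.span {schur c c' | c c'. c \<in> C \<and> c' \<in> C}"

definition proj :: "nat set \<Rightarrow> (nat \<Rightarrow> 'a::zero) \<Rightarrow> (nat \<Rightarrow> 'a)" where
  "proj B x = (\<lambda>i. if i \<in> B then x i else 0)"

text \<open>A code C on the coordinate set S is decomposable if, after a permutation of
  coordinates, it is the direct sum of two nonzero codes; i.e. S splits into I and S - I
  such that C is the direct sum of its projections to I and to S - I, both nonzero.\<close>
definition decomposable :: "nat set \<Rightarrow> (nat \<Rightarrow> 'a::field) set \<Rightarrow> bool" where
  "decomposable S C \<longleftrightarrow> (\<exists>I. I \<subseteq> S \<and> proj I ` C \<noteq> {0} \<and> proj (S - I) ` C \<noteq> {0} \<and>
      C = {proj I x + proj (S - I) y | x y. x \<in> C \<and> y \<in> C})"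

definition indecomposable :: "nat set \<Rightarrow> (nat \<Rightarrow> 'a::field) set \<Rightarrow> bool" where
  "indecomposable S C \<longleftrightarrow> S \<noteq> {} \<and> \<not> decomposable S C"

definition block_decomp :: "nat set \<Rightarrow> (nat \<Rightarrow> 'a::field) set \<Rightarrow> nat set set \<Rightarrow> bool" where
  "block_decomp S C P \<longleftrightarrow> finite P \<and> (\<forall>B\<in>P. B \<noteq> {}) \<and> \<Union>P = S \<and>
     (\<forall>B\<in>P. \<forall>B'\<in>P. B \<noteq> B' \<longrightarrow> B \<inter> B' = {}) \<and>
     C = {(\<Sum>B\<in>P. proj B (x B)) | x. \<forall>B\<in>P. x B \<in> C} \<and>
     (\<forall>B\<in>P. indecomposable B (proj B ` C))"

text \<open>Number of blocks nb(C) of a code of length n (an invariant of C).\<close>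
definition nb :: "nat \<Rightarrow> (nat \<Rightarrow> 'a::field) set \<Rightarrow> nat" where
  "nb n C = (THE m. \<exists>P. block_decomp {..<n} C P \<and> card P = m)"

end

theory Submission
  imports Defs "HOL-Library.Indicator_Function"
begin

text \<open>Because \<open>dotp x (schur c c') = dotp (schur x c) c'\<close> and \<open>C\<close> is its own dual, the dual
  of the Schur square is the stabilizer algebra \<open>{x. \<forall>c\<in>C. schur x c \<in> C}\<close>. Lagrange
  interpolation puts the indicator of every level set of an element of this algebra back into it,
  and splitting \<open>C\<close> along such a level set would decompose a block; so the algebra consists of
  the vectors that are constant on the blocks and is spanned by the block indicators. Hence the
  Schur square has codimension at most \<open>nb C\<close>; as it lies in the space of vectors with zero sum
  on every block, its codimension is also at least \<open>nb C\<close>. In particular all block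
  decompositions have the same number of blocks, and one is obtained by splitting \<open>C\<close> as often
  as possible.\<close>

section \<open>Coordinate vectors\<close>

lemma sum_fun_apply: "(\<Sum>i\<in>T. f i) j = (\<Sum>i\<in>T. f i j)"
  by (induction T rule: infinite_finite_induct) auto

lemma module_hom_proj: "module_hom fscale fscale (proj T :: (nat \<Rightarrow> 'a::field) \<Rightarrow> _)"
  by (auto simp: module_hom_iff fvec.module_axioms proj_def fscale_def fun_eq_iff)

lemma subspace_vecs: "fvec.subspace (vecs n :: (nat \<Rightarrow> 'a::field) set)"
  unfolding fvec.subspace_def vecs_def by (auto simp: fscale_def)

lemma proj_zero [simp]: "proj B 0 = 0"
  by (simp add: proj_def fun_eq_iff)

lemma proj_proj: "proj A (proj B x) = proj (A \<inter> B) x"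
  by (simp add: proj_def fun_eq_iff)

lemma proj_lessThan_vecs: "x \<in> vecs n \<Longrightarrow> proj {..<n} x = x"
  by (auto simp: proj_def vecs_def fun_eq_iff)

lemma sum_proj_partition:
  assumes "finite P" "pairwise disjnt P" "\<And>i. i \<notin> \<Union>P \<Longrightarrow> x i = 0"
  shows "(\<Sum>B\<in>P. proj B x) = x"
proof
  fix l
  show "(\<Sum>B\<in>P. proj B x) l = x l"
  proof (cases "l \<in> \<Union>P")
    case True
    then obtain B0 where B0: "B0 \<in> P" "l \<in> B0" by blast
    have "(\<Sum>B\<in>P. proj B x) l = (\<Sum>B\<in>P. if B = B0 then x l else 0)"
      unfolding sum_fun_apply proj_def
      using assms(2) B0 by (intro sum.cong) (auto simp: pairwise_def disjnt_def)
    then show ?thesis using assms(1) B0(1) by simp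
  qed (use assms(3) in \<open>auto simp: sum_fun_apply proj_def intro: sum.neutral\<close>)
qed

lemma inj_on_indicator_singleton: "inj_on (\<lambda>i. indicator {i} :: nat \<Rightarrow> 'a::zero_neq_one) A"
  by (auto simp: inj_on_def fun_eq_iff split: split_indicator)

lemma mem_span_indicator_singletons:
  assumes "finite T" "\<And>i. i \<notin> T \<Longrightarrow> x i = 0"
  shows "x \<in> fvec.span ((\<lambda>i. indicator {i}) ` T :: (nat \<Rightarrow> 'a::field) set)"
proof -
  have "x = (\<Sum>i\<in>T. fscale (x i) (indicator {i}))"
  proof
    fix j
    have "(\<Sum>i\<in>T. fscale (x i) (indicator {i} :: nat \<Rightarrow> 'a)) j = (\<Sum>i\<in>T. if i = j then x i else 0)"
      unfolding sum_fun_apply fscale_def by (intro sum.cong) (auto split: split_indicator)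
    then show "x j = (\<Sum>i\<in>T. fscale (x i) (indicator {i})) j"
      using assms by simp
  qed
  also have "\<dots> \<in> fvec.span ((\<lambda>i. indicator {i}) ` T)"
    by (intro fvec.span_sum fvec.span_scale fvec.span_base) auto
  finally show ?thesis .
qed

lemma vecs_eq_span: "vecs n = fvec.span ((\<lambda>i. indicator {i}) ` {..<n} :: (nat \<Rightarrow> 'a::field) set)"
proof
  show "vecs n \<subseteq> fvec.span ((\<lambda>i. indicator {i}) ` {..<n})"
    by (intro subsetI mem_span_indicator_singletons) (auto simp: vecs_def)
  show "fvec.span ((\<lambda>i. indicator {i}) ` {..<n}) \<subseteq> vecs n"
    by (rule fvec.span_minimal[OF _ subspace_vecs]) (auto simp: vecs_def)
qed

lemma independent_indicator_singletons:
  "fvec.independent ((\<lambda>i. indicator {i}) ` {..<n} :: (nat \<Rightarrow> 'a::field) set)"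
proof (rule fvec.independent_if_scalars_zero)
  fix f :: "(nat \<Rightarrow> 'a) \<Rightarrow> 'a" and x :: "nat \<Rightarrow> 'a"
  assume sum0: "(\<Sum>x\<in>(\<lambda>i. indicator {i}) ` {..<n}. fscale (f x) x) = 0"
    and "x \<in> (\<lambda>i. indicator {i}) ` {..<n}"
  then obtain i where i: "i < n" "x = indicator {i}" by auto
  have "0 = (\<Sum>j<n. f (indicator {j}) * (indicator {j} i :: 'a))"
    using fun_cong[OF sum0, of i] by (simp add: sum_fun_apply fscale_def sum.reindex[OF inj_on_indicator_singleton])
  also have "\<dots> = f x"
    using i by (simp add: indicator_def)
  finally show "f x = 0" ..
qed simp

lemma dim_vecs: "fvec.dim (vecs n :: (nat \<Rightarrow> 'a::field) set) = n"
  unfolding vecs_eq_span fvec.dim_span_eq_card_independent[OF independent_indicator_singletons]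
  by (simp add: card_image[OF inj_on_indicator_singleton])

lemma independent_vecs_bound:
  assumes "fvec.independent K" "K \<subseteq> vecs n"
  shows "finite K \<and> card K \<le> n"
  using fvec.independent_span_bound[of "(\<lambda>i. indicator {i}) ` {..<n}" K] assms
    card_image_le[of "{..<n}" "\<lambda>i. indicator {i} :: nat \<Rightarrow> 'a"]
  by (auto simp: vecs_eq_span)

lemma dim_le_card_if_inj_on_proj:
  assumes V: "fvec.subspace V" and T: "finite T" and inj: "inj_on (proj T) V"
  shows "fvec.dim (V :: (nat \<Rightarrow> 'a::field) set) \<le> card T"
proof -
  obtain K where K: "K \<subseteq> V" "fvec.independent K" "V \<subseteq> fvec.span K" "card K = fvec.dim V"
    using fvec.basis_exists by blast
  have injK: "inj_on (proj T) (fvec.span K)"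
    using inj fvec.span_minimal[OF K(1) V] by (rule inj_on_subset)
  have "fvec.independent (proj T ` K)"
    using module_hom_proj K(2) injK by (rule module_hom.independent_injective_image)
  moreover have "proj T ` K \<subseteq> fvec.span ((\<lambda>i. indicator {i}) ` T)"
    using T by (auto simp: proj_def intro: mem_span_indicator_singletons)
  ultimately have "card (proj T ` K) \<le> card ((\<lambda>i. indicator {i} :: nat \<Rightarrow> 'a) ` T)"
    using T by (intro conjunct2[OF fvec.independent_span_bound]) auto
  also have "\<dots> \<le> card T"
    using T by (rule card_image_le)
  finally show ?thesis
    using K(4) card_image[OF inj_on_subset[OF injK fvec.span_superset]] by simp
qed

lemma eq_0_if_block_sums_zero:
  assumes "pairwise disjnt P" "\<forall>B\<in>P. finite B \<and> r B \<in> B"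
    and "\<forall>B\<in>P. sum y B = 0" "\<forall>i. i \<notin> r ` P \<longrightarrow> y i = (0::'a::comm_monoid_add)"
  shows "y = 0"
proof
  fix l
  show "y l = 0 l"
  proof (cases "l \<in> r ` P")
    case True
    then obtain B where B: "B \<in> P" "l = r B" by blast
    have "y i = 0" if "i \<in> B - {r B}" for i
    proof -
      have "i \<noteq> r B'" if "B' \<in> P" for B'
        using assms(1,2) B(1) \<open>i \<in> B - {r B}\<close> that
        unfolding pairwise_def disjnt_def by (metis DiffD1 DiffD2 disjoint_iff singletonI)
      then show ?thesis
        using assms(4) by blast
    qed
    then have "sum y B = y (r B)"
      using sum.remove[of B "r B" y] assms(2) B(1) by simp
    then show ?thesis
      using assms(3) B by simp
  qed (use assms(4) in simp)
qed

lemma dim_add_card_le_if_block_sums_zero: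
  assumes V: "fvec.subspace V" "V \<subseteq> vecs n"
    and P: "finite P" "{} \<notin> P" "pairwise disjnt P" "\<Union>P \<subseteq> {..<n}"
    and sums: "\<forall>y\<in>V. \<forall>B\<in>P. sum y B = (0::'a::field)"
  shows "fvec.dim V + card P \<le> n"
proof -
  obtain r where r: "\<forall>B\<in>P. r B \<in> B"
    using P(2) by (metis ex_in_conv)
  have fin: "\<forall>B\<in>P. finite B"
    using P(4) by (meson Sup_upper finite_lessThan finite_subset order_trans)
  have "inj_on r P"
    using P(3) r unfolding pairwise_def disjnt_def inj_on_def by (metis disjoint_iff)
  define T where "T = {..<n} - r ` P"
  have rP: "r ` P \<subseteq> {..<n}"
    using r P(4) by blast
  then have card_T: "card T = n - card P" and card_P: "card P \<le> n"
    using card_image[OF \<open>inj_on r P\<close>] card_mono[OF _ rP]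
    by (simp_all add: T_def card_Diff_subset finite_subset)
  have "y = 0" if y: "y \<in> V" "proj T y = 0" for y
  proof (rule eq_0_if_block_sums_zero[of P r])
    show "\<forall>i. i \<notin> r ` P \<longrightarrow> y i = 0"
    proof (intro allI impI)
      fix i assume "i \<notin> r ` P"
      then show "y i = 0"
        using fun_cong[OF y(2), of i] y(1) V(2) by (cases "i < n") (auto simp: T_def proj_def vecs_def)
    qed
  qed (use P(3) fin r sums y(1) in auto)
  then have "inj_on (proj T) V"
    using module_hom.inj_on_iff_eq_0[OF module_hom_proj V(1)] by blast
  then have "fvec.dim V \<le> card T"
    using V(1) by (intro dim_le_card_if_inj_on_proj) (auto simp: T_def)
  with card_T card_P show ?thesis by linarith
qed

section \<open>Orthogonal complements\<close>

definition dotp :: "nat \<Rightarrow> (nat \<Rightarrow> 'a::field) \<Rightarrow> (nat \<Rightarrow> 'a) \<Rightarrow> 'a" where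
  "dotp n x y = (\<Sum>i<n. x i * y i)"

lemma dual_code_dotp: "dual_code n K = {x \<in> vecs n. \<forall>c\<in>K. dotp n x c = 0}"
  by (simp add: dual_code_def dotp_def)

lemma dotp_indicator: "B \<subseteq> {..<n} \<Longrightarrow> dotp n (indicator B) y = sum y B"
  by (simp add: dotp_def indicator_def if_distrib sum.If_cases Int_absorb1)

lemma dotp_diff_scale_left: "dotp n (x - fscale t v) b = dotp n x b - t * dotp n v b"
  by (simp add: dotp_def fscale_def algebra_simps sum_subtractf sum_distrib_left)

lemma subspace_dotp_right_eq_0: "fvec.subspace {w. dotp n x w = (0::'a::field)}"
proof -
  have "dotp n x (fscale c y) = c * dotp n x y" for c y
    by (simp add: dotp_def fscale_def sum_distrib_left algebra_simps)
  then show ?thesis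
    unfolding fvec.subspace_def by (auto simp: dotp_def distrib_left sum.distrib)
qed

lemma subspace_dual_code: "fvec.subspace (dual_code n (K :: (nat \<Rightarrow> 'a::field) set))"
proof -
  have "dotp n (fscale c x) y = c * dotp n x y" for c :: 'a and x y
    by (simp add: dotp_def fscale_def sum_distrib_left algebra_simps)
  then show ?thesis
    unfolding fvec.subspace_def dual_code_dotp
    by (auto simp: dotp_def distrib_right sum.distrib vecs_def fscale_def)
qed

lemma dual_code_span: "dual_code n (fvec.span K) = dual_code n K"
proof
  show "dual_code n (fvec.span K) \<subseteq> dual_code n K"
    using fvec.span_superset by (auto simp: dual_code_def)
  show "dual_code n K \<subseteq> dual_code n (fvec.span K)"
  proof
    fix x assume x: "x \<in> dual_code n K"
    then have "fvec.span K \<subseteq> {w. dotp n x w = 0}"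
      by (intro fvec.span_minimal[OF _ subspace_dotp_right_eq_0]) (auto simp: dual_code_dotp)
    then show "x \<in> dual_code n (fvec.span K)"
      using x by (auto simp: dual_code_dotp)
  qed
qed

lemma dim_le_dim_inter_hyperplane:
  assumes V: "fvec.subspace V" "V \<subseteq> vecs n"
  shows "fvec.dim (V :: (nat \<Rightarrow> 'a::field) set) \<le> fvec.dim (V \<inter> {x. dotp n x b = 0}) + 1"
proof (cases "V \<subseteq> {x. dotp n x b = 0}")
  case True
  then show ?thesis by (simp add: Int_absorb2)
next
  case False
  then obtain v where v: "v \<in> V" "dotp n v b \<noteq> 0" by auto
  obtain K where K: "K \<subseteq> V \<inter> {x. dotp n x b = 0}" "fvec.independent K"
      "V \<inter> {x. dotp n x b = 0} \<subseteq> fvec.span K" "card K = fvec.dim (V \<inter> {x. dotp n x b = 0})"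
    using fvec.basis_exists by blast
  have "finite K"
    using independent_vecs_bound[OF K(2)] K(1) V(2) by blast
  have "V \<subseteq> fvec.span (insert v K)"
  proof
    fix x assume x: "x \<in> V"
    define t where "t = dotp n x b / dotp n v b"
    have "x - fscale t v \<in> V \<inter> {x. dotp n x b = 0}"
      using x v V(1) by (auto simp: dotp_diff_scale_left t_def fvec.subspace_diff fvec.subspace_scale)
    then have "(x - fscale t v) + fscale t v \<in> fvec.span (insert v K)"
      using K(3) fvec.span_mono[of K "insert v K"]
      by (intro fvec.span_add fvec.span_scale) (auto intro: fvec.span_base)
    then show "x \<in> fvec.span (insert v K)" by simp
  qed
  then have "fvec.dim V \<le> card (insert v K)"
    using \<open>finite K\<close> by (intro fvec.dim_le_card) auto
  also have "\<dots> \<le> card K + 1"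
    using \<open>finite K\<close> by (simp add: card_insert_if)
  finally show ?thesis using K(4) by simp
qed

lemma card_add_dim_dual_code_ge:
  assumes "finite K"
  shows "n \<le> card K + fvec.dim (dual_code n (K :: (nat \<Rightarrow> 'a::field) set))"
  using assms
proof (induction K rule: finite_induct)
  case empty
  have "dual_code n {} = (vecs n :: (nat \<Rightarrow> 'a) set)" by (simp add: dual_code_def)
  then show ?case by (simp add: dim_vecs)
next
  case (insert b K)
  have "dual_code n (insert b K) = dual_code n K \<inter> {x. dotp n x b = 0}"
    by (auto simp: dual_code_dotp)
  moreover have "fvec.dim (dual_code n K) \<le> fvec.dim (dual_code n K \<inter> {x. dotp n x b = 0}) + 1"
    by (rule dim_le_dim_inter_hyperplane[OF subspace_dual_code]) (auto simp: dual_code_def)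
  ultimately show ?case using insert by simp
qed

lemma dim_add_dim_dual_code_ge:
  assumes V: "fvec.subspace V" "V \<subseteq> vecs n"
  shows "n \<le> fvec.dim V + fvec.dim (dual_code n (V :: (nat \<Rightarrow> 'a::field) set))"
proof -
  obtain K where K: "K \<subseteq> V" "fvec.independent K" "V \<subseteq> fvec.span K" "card K = fvec.dim V"
    using fvec.basis_exists by blast
  have "finite K"
    using independent_vecs_bound[OF K(2)] K(1) V(2) by blast
  have "dual_code n V = dual_code n K"
  proof
    show "dual_code n V \<subseteq> dual_code n K"
      using K(1) by (auto simp: dual_code_def)
    show "dual_code n K \<subseteq> dual_code n V"
      using K(3) by (subst dual_code_span[symmetric]) (auto simp: dual_code_def)
  qed
  then show ?thesis
    using card_add_dim_dual_code_ge[OF \<open>finite K\<close>, of n] K(4) by simp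
qed

section \<open>The stabilizer algebra of a code\<close>

definition stabilizer :: "nat \<Rightarrow> (nat \<Rightarrow> 'a::field) set \<Rightarrow> (nat \<Rightarrow> 'a) set" where
  "stabilizer n C = {x \<in> vecs n. \<forall>c\<in>C. schur x c \<in> C}"

lemma schur_vecs: "x \<in> vecs n \<Longrightarrow> schur x c \<in> vecs n"
  by (simp add: vecs_def schur_def)

lemma schur_indicator: "schur (indicator B) c = proj B c"
  by (auto simp: schur_def proj_def fun_eq_iff split: split_indicator)

lemma indicator_mem_stabilizer_iff:
  assumes "B \<subseteq> {..<n}"
  shows "indicator B \<in> stabilizer n C \<longleftrightarrow> (\<forall>c\<in>C. proj B c \<in> C)"
  using assms by (auto simp: stabilizer_def schur_indicator vecs_def split: split_indicator)

context
  fixes n :: nat and C :: "(nat \<Rightarrow> 'a::field) set"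
  assumes code: "lin_code n C"
begin

lemma subspace_stabilizer: "fvec.subspace (stabilizer n C)"
proof -
  have C: "fvec.subspace C" using code by (simp add: lin_code_def)
  have "schur (x + y) c = schur x c + schur y c" "schur (fscale a x) c = fscale a (schur x c)"
    for a :: 'a and x y c :: "nat \<Rightarrow> 'a"
    by (auto simp: schur_def fscale_def fun_eq_iff algebra_simps)
  moreover have "schur 0 c = 0" for c :: "nat \<Rightarrow> 'a"
    by (simp add: schur_def fun_eq_iff)
  ultimately show ?thesis
    using fvec.subspace_add[OF C] fvec.subspace_scale[OF C] fvec.subspace_0[OF C]
      fvec.subspace_add[OF subspace_vecs] fvec.subspace_scale[OF subspace_vecs]
      fvec.subspace_0[OF subspace_vecs]
    unfolding fvec.subspace_def stabilizer_def by auto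
qed

lemma schur_mem_stabilizer:
  assumes "x \<in> stabilizer n C" "y \<in> stabilizer n C"
  shows "schur x y \<in> stabilizer n C"
proof -
  have "schur (schur x y) c = schur x (schur y c)" for c
    by (simp add: schur_def mult.assoc)
  with assms show ?thesis
    by (auto simp: stabilizer_def schur_vecs)
qed

lemma indicator_lessThan_mem_stabilizer: "indicator {..<n} \<in> stabilizer n C"
  using code by (subst indicator_mem_stabilizer_iff) (auto simp: lin_code_def proj_lessThan_vecs subset_iff)

text \<open>The Lagrange basis polynomial of \<open>lam\<close> for the nodes \<open>M\<close>, evaluated at \<open>x\<close>; it lies in
  the stabilizer because the stabilizer is a unital subalgebra of \<open>(vecs n, schur)\<close>.\<close>

lemma lagrange_basis_mem_stabilizer:
  assumes x: "x \<in> stabilizer n C" and "finite M" "lam \<notin> M"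
  shows "(\<lambda>i. if i < n then \<Prod>mu\<in>M. (x i - mu) / (lam - mu) else 0) \<in> stabilizer n C"
  using \<open>finite M\<close> \<open>lam \<notin> M\<close>
proof (induction M rule: finite_induct)
  case empty
  have "(\<lambda>i. if i < n then \<Prod>mu\<in>{}. (x i - mu) / (lam - mu) else 0) = indicator {..<n}"
    by (simp add: fun_eq_iff)
  then show ?case
    using indicator_lessThan_mem_stabilizer by simp
next
  case (insert mu M)
  let ?f = "fscale (1 / (lam - mu)) (x - fscale mu (indicator {..<n}))"
  have f: "?f \<in> stabilizer n C"
    using x indicator_lessThan_mem_stabilizer subspace_stabilizer
    by (intro fvec.subspace_scale fvec.subspace_diff) auto
  have "schur ?f (\<lambda>i. if i < n then \<Prod>mu\<in>M. (x i - mu) / (lam - mu) else 0) =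
      (\<lambda>i. if i < n then \<Prod>mu\<in>insert mu M. (x i - mu) / (lam - mu) else 0)"
    using insert.hyps by (auto simp: schur_def fscale_def fun_eq_iff)
  with schur_mem_stabilizer[OF f insert.IH] insert.prems show ?case by simp
qed

lemma level_set_indicator_mem_stabilizer:
  assumes x: "x \<in> stabilizer n C"
  shows "indicator {i. i < n \<and> x i = lam} \<in> stabilizer n C"
proof -
  let ?M = "x ` {..<n} - {lam}"
  have "(\<lambda>i. if i < n then \<Prod>mu\<in>?M. (x i - mu) / (lam - mu) else 0) = indicator {i. i < n \<and> x i = lam}"
  proof
    fix i
    have "(\<Prod>mu\<in>?M. (x i - mu) / (lam - mu)) = 0" if "i < n" "x i \<noteq> lam"
      using that by (intro prod_zero) auto
    then show "(if i < n then \<Prod>mu\<in>?M. (x i - mu) / (lam - mu) else 0) = indicator {i. i < n \<and> x i = lam} i"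
      by (auto simp: indicator_def intro!: prod.neutral)
  qed
  with lagrange_basis_mem_stabilizer[OF x, of ?M lam] show ?thesis by simp
qed

end

lemma self_dual_lin_code: "self_dual n C \<Longrightarrow> lin_code n C"
  by (simp add: self_dual_def)

lemma self_dual_mem_iff:
  assumes "self_dual n C"
  shows "c \<in> C \<longleftrightarrow> c \<in> vecs n \<and> (\<forall>c'\<in>C. dotp n c c' = 0)"
proof -
  have "c \<in> C \<longleftrightarrow> c \<in> dual_code n C"
    using assms by (simp add: self_dual_def)
  then show ?thesis by (simp add: dual_code_dotp)
qed

lemma self_dual_full_support:
  assumes "self_dual n C"
  shows "\<forall>i<n. \<exists>c\<in>C. c i \<noteq> 0"
proof (intro allI impI)
  fix i assume "i < n"
  then have "indicator {i} \<in> vecs n" and dotp_i: "\<And>c. dotp n (indicator {i}) c = c i"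
    by (simp_all add: vecs_def dotp_indicator)
  then have "indicator {i} \<in> C" if "\<forall>c\<in>C. c i = 0"
    using that self_dual_mem_iff[OF assms, of "indicator {i}"] by (simp add: dotp_i)
  then show "\<exists>c\<in>C. c i \<noteq> 0"
    by (metis indicator_simps(1) insertI1 zero_neq_one)
qed

lemma dual_schur_square_eq_stabilizer:
  assumes "self_dual n C"
  shows "dual_code n (schur_square C) = stabilizer n C"
proof (intro set_eqI)
  fix x :: "nat \<Rightarrow> 'a"
  have "dotp n (schur x c) c' = dotp n x (schur c c')" for c c'
    by (simp add: dotp_def schur_def mult.assoc)
  then have "x \<in> dual_code n (schur_square C) \<longleftrightarrow>
      x \<in> vecs n \<and> (\<forall>c\<in>C. \<forall>c'\<in>C. dotp n (schur x c) c' = 0)"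
    unfolding schur_square_def dual_code_span by (auto simp: dual_code_dotp) blast
  also have "\<dots> \<longleftrightarrow> x \<in> stabilizer n C"
    unfolding stabilizer_def using self_dual_mem_iff[OF assms] schur_vecs by blast
  finally show "x \<in> dual_code n (schur_square C) \<longleftrightarrow> x \<in> stabilizer n C" .
qed

section \<open>Block decompositions\<close>

definition splitting_partition :: "nat \<Rightarrow> (nat \<Rightarrow> 'a::field) set \<Rightarrow> nat set set \<Rightarrow> bool" where
  "splitting_partition n C P \<longleftrightarrow> finite P \<and> {} \<notin> P \<and> \<Union>P = {..<n} \<and> pairwise disjnt P \<and>
     (\<forall>B\<in>P. \<forall>c\<in>C. proj B c \<in> C)"

lemma splitting_partition_if_block_decomp:
  assumes code: "lin_code n C" and "block_decomp {..<n} C P"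
  shows "splitting_partition n C P"
proof -
  obtain "finite P" "\<forall>B\<in>P. B \<noteq> {}" "\<Union>P = {..<n}" "\<forall>B\<in>P. \<forall>B'\<in>P. B \<noteq> B' \<longrightarrow> B \<inter> B' = {}"
      and Ceq: "C = {(\<Sum>B\<in>P. proj B (x B)) | x. \<forall>B\<in>P. x B \<in> C}"
    using \<open>block_decomp {..<n} C P\<close> unfolding block_decomp_def by (elim conjE) (rule that)
  have "proj B c \<in> C" if "B \<in> P" "c \<in> C" for B c
  proof -
    let ?x = "\<lambda>B'. if B' = B then c else 0"
    have "(\<Sum>B'\<in>P. proj B' (?x B')) = (\<Sum>B'\<in>P. if B' = B then proj B c else 0)"
      by (intro sum.cong) auto
    also have "\<dots> = proj B c"
      using that \<open>finite P\<close> by simp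
    finally have "proj B c = (\<Sum>B'\<in>P. proj B' (?x B'))" ..
    moreover have "\<forall>B'\<in>P. ?x B' \<in> C"
      using that code fvec.subspace_0 by (auto simp: lin_code_def)
    ultimately have "proj B c \<in> {(\<Sum>B\<in>P. proj B (x B)) | x. \<forall>B\<in>P. x B \<in> C}"
      by (intro CollectI exI[of _ ?x]) blast
    then show ?thesis by (subst Ceq)
  qed
  with \<open>finite P\<close> \<open>\<forall>B\<in>P. B \<noteq> {}\<close> \<open>\<Union>P = {..<n}\<close> \<open>\<forall>B\<in>P. \<forall>B'\<in>P. B \<noteq> B' \<longrightarrow> B \<inter> B' = {}\<close>
  show ?thesis
    by (auto simp: splitting_partition_def pairwise_def disjnt_def)
qed

lemma block_decomp_if_splitting_partition:
  assumes code: "lin_code n C" and sp: "splitting_partition n C P"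
    and ind: "\<forall>B\<in>P. indecomposable B (proj B ` C)"
  shows "block_decomp {..<n} C P"
proof -
  have "finite P" "\<Union>P = {..<n}" "pairwise disjnt P" and split: "\<forall>B\<in>P. \<forall>c\<in>C. proj B c \<in> C"
    using sp by (simp_all add: splitting_partition_def)
  have Ceq: "C = {(\<Sum>B\<in>P. proj B (x B)) | x. \<forall>B\<in>P. x B \<in> C}"
  proof (intro set_eqI iffI)
    fix c assume "c \<in> C"
    then have "c \<in> vecs n"
      using code by (auto simp: lin_code_def)
    then have "c = (\<Sum>B\<in>P. proj B c)"
      using \<open>finite P\<close> \<open>pairwise disjnt P\<close> \<open>\<Union>P = {..<n}\<close>
      by (intro sum_proj_partition[symmetric]) (auto simp: vecs_def)
    with \<open>c \<in> C\<close> show "c \<in> {(\<Sum>B\<in>P. proj B (x B)) | x. \<forall>B\<in>P. x B \<in> C}"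
      by (intro CollectI exI[of _ "\<lambda>_. c"]) blast
  next
    fix c assume "c \<in> {(\<Sum>B\<in>P. proj B (x B)) | x. \<forall>B\<in>P. x B \<in> C}"
    then obtain x where "c = (\<Sum>B\<in>P. proj B (x B))" "\<forall>B\<in>P. x B \<in> C"
      by blast
    moreover have "fvec.subspace C"
      using code by (simp add: lin_code_def)
    ultimately show "c \<in> C"
      using split by (simp add: fvec.subspace_sum)
  qed
  show ?thesis
    unfolding block_decomp_def
    by (intro conjI Ceq) (use sp ind in \<open>auto simp: splitting_partition_def pairwise_def disjnt_def\<close>)
qed

lemma decomposable_if_splitting:
  assumes C: "fvec.subspace C" and "I \<subseteq> B" and split: "\<forall>c\<in>C. proj I c \<in> C"
    and "\<exists>c\<in>C. proj I c \<noteq> 0" "\<exists>c\<in>C. proj (B - I) c \<noteq> 0"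
  shows "decomposable B (proj B ` C)"
  unfolding decomposable_def
proof (intro exI conjI)
  have nonzero: "proj J ` proj B ` C \<noteq> {0}" if "J \<subseteq> B" "\<exists>c\<in>C. proj J c \<noteq> 0" for J
  proof -
    from that(2) obtain c where "c \<in> C" "proj J c \<noteq> 0" by blast
    moreover have "proj J (proj B c) = proj J c"
      using \<open>J \<subseteq> B\<close> by (simp add: proj_proj Int_absorb2)
    ultimately show ?thesis by (metis image_eqI singletonD)
  qed
  show "proj I ` proj B ` C \<noteq> {0}"
    using assms(2,4) by (rule nonzero)
  show "proj (B - I) ` proj B ` C \<noteq> {0}"
    using assms(5) by (intro nonzero) auto
  show "proj B ` C = {proj I y + proj (B - I) z |y z. y \<in> proj B ` C \<and> z \<in> proj B ` C}"
  proof (intro set_eqI iffI)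
    fix w assume "w \<in> proj B ` C"
    moreover from this have "w = proj I w + proj (B - I) w"
      using \<open>I \<subseteq> B\<close> by (auto simp: proj_def fun_eq_iff)
    ultimately show "w \<in> {proj I y + proj (B - I) z |y z. y \<in> proj B ` C \<and> z \<in> proj B ` C}"
      by blast
  next
    fix w assume "w \<in> {proj I y + proj (B - I) z |y z. y \<in> proj B ` C \<and> z \<in> proj B ` C}"
    then obtain c1 c2 where c: "c1 \<in> C" "c2 \<in> C"
      and w: "w = proj I (proj B c1) + proj (B - I) (proj B c2)"
      by blast
    have "w = proj B (proj I c1 + (c2 - proj I c2))"
      using \<open>I \<subseteq> B\<close> unfolding w by (auto simp: proj_def fun_eq_iff)
    moreover have "proj I c1 + (c2 - proj I c2) \<in> C"
      using c split C by (intro fvec.subspace_add fvec.subspace_diff) auto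
    ultimately show "w \<in> proj B ` C" by blast
  qed
qed (fact \<open>I \<subseteq> B\<close>)

lemma splitting_if_decomposable:
  assumes C: "fvec.subspace C" and split: "\<forall>c\<in>C. proj B c \<in> C"
    and dec: "decomposable B (proj B ` C)"
  obtains I where "I \<subseteq> B" "I \<noteq> {}" "B - I \<noteq> {}"
    "\<forall>c\<in>C. proj I c \<in> C" "\<forall>c\<in>C. proj (B - I) c \<in> C"
proof -
  obtain I where I: "I \<subseteq> B" "proj I ` proj B ` C \<noteq> {0}" "proj (B - I) ` proj B ` C \<noteq> {0}"
    and eq: "proj B ` C = {proj I y + proj (B - I) z | y z. y \<in> proj B ` C \<and> z \<in> proj B ` C}"
    using dec unfolding decomposable_def by (elim exE conjE) (rule that)
  have "proj {} ` proj B ` C = {0}"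
    using fvec.subspace_0[OF C] by (auto simp: proj_def fun_eq_iff)
  then have "I \<noteq> {}" "B - I \<noteq> {}"
    using I(2,3) by metis+
  have split_I: "proj I c \<in> C" if "c \<in> C" for c
  proof -
    have "proj I c = proj I (proj B c) + proj (B - I) (proj B 0)"
      using I(1) by (simp add: proj_proj Int_absorb2)
    moreover have "proj B c \<in> proj B ` C" "proj B 0 \<in> proj B ` C"
      using that fvec.subspace_0[OF C] by blast+
    ultimately have "proj I c \<in> proj B ` C"
      by (subst eq) blast
    then show ?thesis
      using split by auto
  qed
  have "proj (B - I) c \<in> C" if "c \<in> C" for c
  proof -
    have "proj (B - I) c = proj B c - proj I c"
      using I(1) by (auto simp: proj_def fun_eq_iff)
    then show ?thesis
      using that split split_I fvec.subspace_diff[OF C] by simp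
  qed
  with that I(1) \<open>I \<noteq> {}\<close> \<open>B - I \<noteq> {}\<close> split_I show ?thesis
    by blast
qed

lemma splitting_partition_split_block:
  assumes sp: "splitting_partition n C P" and "B \<in> P" and "I \<subseteq> B" "I \<noteq> {}" "B - I \<noteq> {}"
    and "\<forall>c\<in>C. proj I c \<in> C" "\<forall>c\<in>C. proj (B - I) c \<in> C"
  shows "splitting_partition n C (insert I (insert (B - I) (P - {B})))"
    and "card (insert I (insert (B - I) (P - {B}))) = Suc (card P)"
proof -
  have "finite P" "pairwise disjnt P"
    using sp by (simp_all add: splitting_partition_def)
  have disjnt_B: "disjnt B B'" if "B' \<in> P - {B}" for B'
    using \<open>pairwise disjnt P\<close> \<open>B \<in> P\<close> that by (auto simp: pairwise_def)
  then have "I \<notin> P - {B}" "B - I \<notin> P - {B}"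
    using \<open>I \<subseteq> B\<close> \<open>I \<noteq> {}\<close> \<open>B - I \<noteq> {}\<close> by (fastforce simp: disjnt_def)+
  moreover have "I \<noteq> B - I"
    using \<open>I \<noteq> {}\<close> by blast
  moreover have "card P > 0"
    using \<open>finite P\<close> \<open>B \<in> P\<close> card_gt_0_iff by blast
  ultimately show "card (insert I (insert (B - I) (P - {B}))) = Suc (card P)"
    using \<open>finite P\<close> \<open>B \<in> P\<close> by simp
  have "pairwise disjnt (insert I (insert (B - I) (P - {B})))"
    using \<open>pairwise disjnt P\<close> disjnt_B \<open>I \<subseteq> B\<close>
    by (auto simp: pairwise_insert disjnt_def pairwise_def)
  moreover have "\<Union>(insert I (insert (B - I) (P - {B}))) = \<Union>P"
    using \<open>B \<in> P\<close> \<open>I \<subseteq> B\<close> by blast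
  ultimately show "splitting_partition n C (insert I (insert (B - I) (P - {B})))"
    using sp assms(4-7) by (auto simp: splitting_partition_def)
qed

lemma splitting_partition_card_le:
  assumes "splitting_partition n C P"
  shows "card P \<le> n"
proof -
  have "finite P" "{} \<notin> P" "pairwise disjnt P" "\<Union>P = {..<n}"
    using assms by (simp_all add: splitting_partition_def)
  have fin: "finite B" if "B \<in> P" for B
    using \<open>\<Union>P = {..<n}\<close> that by (metis Union_upper finite_lessThan finite_subset)
  have "card P = (\<Sum>B\<in>P. 1)"
    by simp
  also have "\<dots> \<le> (\<Sum>B\<in>P. card B)"
    using fin \<open>{} \<notin> P\<close> by (intro sum_mono) (auto simp: Suc_le_eq card_gt_0_iff)
  also have "\<dots> = n"
    using card_Union_disjoint[OF \<open>pairwise disjnt P\<close> fin] \<open>\<Union>P = {..<n}\<close> by simp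
  finally show ?thesis .
qed

lemma block_decomp_exists:
  assumes code: "lin_code n C" and "0 < n"
  obtains P where "block_decomp {..<n} C P"
proof -
  have "splitting_partition n C {{..<n}}"
    using code \<open>0 < n\<close> by (auto simp: splitting_partition_def lin_code_def proj_lessThan_vecs subset_iff)
  then obtain P where P: "splitting_partition n C P"
    and max: "\<And>P'. splitting_partition n C P' \<Longrightarrow> card P' \<le> card P"
    using ex_has_greatest_nat[of "splitting_partition n C" _ card "Suc n"]
      splitting_partition_card_le by (metis less_Suc_eq_le)
  have "\<not> decomposable B (proj B ` C)" if "B \<in> P" for B
  proof
    assume dec: "decomposable B (proj B ` C)"
    have "fvec.subspace C" "\<forall>c\<in>C. proj B c \<in> C"
      using code P that by (auto simp: lin_code_def splitting_partition_def)
    then obtain I where "I \<subseteq> B" "I \<noteq> {}" "B - I \<noteq> {}"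
      "\<forall>c\<in>C. proj I c \<in> C" "\<forall>c\<in>C. proj (B - I) c \<in> C"
      using dec by (rule splitting_if_decomposable)
    from splitting_partition_split_block[OF P that this] max show False
      by (metis Suc_n_not_le_n)
  qed
  moreover have "B \<noteq> {}" if "B \<in> P" for B
    using P that by (auto simp: splitting_partition_def)
  ultimately have "block_decomp {..<n} C P"
    using code P by (intro block_decomp_if_splitting_partition) (auto simp: indecomposable_def)
  then show ?thesis by (rule that)
qed

context
  fixes n :: nat and C :: "(nat \<Rightarrow> 'a::field) set" and P :: "nat set set"
  assumes code: "lin_code n C" and bd: "block_decomp {..<n} C P"
begin

lemma block_decomp_splitting: "splitting_partition n C P"
  using code bd by (rule splitting_partition_if_block_decomp)

lemma block_decomp_indecomposable:
  assumes "B \<in> P"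
  shows "indecomposable B (proj B ` C)"
proof -
  have "\<forall>B\<in>P. indecomposable B (proj B ` C)"
    using bd unfolding block_decomp_def by (elim conjE)
  with assms show ?thesis by blast
qed

lemma block_subset_lessThan: "B \<in> P \<Longrightarrow> B \<subseteq> {..<n}"
  using block_decomp_splitting by (auto simp: splitting_partition_def)

lemma block_indicator_mem_stabilizer: "B \<in> P \<Longrightarrow> indicator B \<in> stabilizer n C"
  using block_decomp_splitting block_subset_lessThan
  by (subst indicator_mem_stabilizer_iff) (auto simp: splitting_partition_def)

lemma stabilizer_const_on_block:
  assumes supp: "\<forall>i<n. \<exists>c\<in>C. c i \<noteq> 0" and x: "x \<in> stabilizer n C"
    and "B \<in> P" "i \<in> B" "j \<in> B"
  shows "x i = x j"
proof (rule ccontr)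
  assume "x i \<noteq> x j"
  define L where "L = {l. l < n \<and> x l = x i}"
  have "\<forall>c\<in>C. proj L c \<in> C"
    using level_set_indicator_mem_stabilizer[OF code x]
    by (subst indicator_mem_stabilizer_iff[symmetric]) (auto simp: L_def)
  moreover have "\<forall>c\<in>C. proj B c \<in> C"
    using block_decomp_splitting \<open>B \<in> P\<close> by (auto simp: splitting_partition_def)
  ultimately have split: "\<forall>c\<in>C. proj (B \<inter> L) c \<in> C"
    by (simp add: proj_proj[symmetric])
  have nonzero_at: "\<exists>c\<in>C. proj J c \<noteq> 0" if "l \<in> J" "l \<in> B" for J l
  proof -
    obtain c where "c \<in> C" "c l \<noteq> 0"
      using supp block_subset_lessThan[OF \<open>B \<in> P\<close>] \<open>l \<in> B\<close> by blast
    moreover from this have "proj J c l \<noteq> 0"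
      using \<open>l \<in> J\<close> by (simp add: proj_def)
    ultimately show ?thesis by (metis zero_fun_def)
  qed
  have i_in: "i \<in> B \<inter> L" and j_in: "j \<in> B - B \<inter> L"
    using block_subset_lessThan[OF \<open>B \<in> P\<close>] \<open>i \<in> B\<close> \<open>j \<in> B\<close> \<open>x i \<noteq> x j\<close> by (auto simp: L_def)
  have "decomposable B (proj B ` C)"
    using code unfolding lin_code_def
    by (intro decomposable_if_splitting[of C "B \<inter> L" B] split nonzero_at[OF i_in \<open>i \<in> B\<close>]
        nonzero_at[OF j_in \<open>j \<in> B\<close>]) auto
  with block_decomp_indecomposable[OF \<open>B \<in> P\<close>] show False
    by (simp add: indecomposable_def)
qed

lemma stabilizer_subset_span_block_indicators:
  assumes supp: "\<forall>i<n. \<exists>c\<in>C. c i \<noteq> 0"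
  shows "stabilizer n C \<subseteq> fvec.span (indicator ` P)"
proof
  fix x assume x: "x \<in> stabilizer n C"
  have "proj B x \<in> fvec.span (indicator ` P)" if "B \<in> P" for B
  proof -
    have "B \<noteq> {}"
      using block_decomp_splitting \<open>B \<in> P\<close> by (auto simp: splitting_partition_def)
    then obtain i where "i \<in> B" by blast
    have eq: "proj B x = fscale (x i) (indicator B)"
    proof
      fix l
      show "proj B x l = fscale (x i) (indicator B) l"
        using stabilizer_const_on_block[OF supp x \<open>B \<in> P\<close> _ \<open>i \<in> B\<close>, of l]
        by (cases "l \<in> B") (simp_all add: proj_def fscale_def)
    qed
    show ?thesis
      unfolding eq using \<open>B \<in> P\<close> by (intro fvec.span_scale fvec.span_base imageI)
  qed
  then have "(\<Sum>B\<in>P. proj B x) \<in> fvec.span (indicator ` P)"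
    by (rule fvec.span_sum)
  moreover have "(\<Sum>B\<in>P. proj B x) = x"
    using block_decomp_splitting x
    by (intro sum_proj_partition) (auto simp: splitting_partition_def stabilizer_def vecs_def)
  ultimately show "x \<in> fvec.span (indicator ` P)" by simp
qed

end

section \<open>The dimension of the Schur square\<close>

lemma schur_square_subset_vecs: "lin_code n C \<Longrightarrow> schur_square C \<subseteq> vecs n"
  unfolding schur_square_def
  by (intro fvec.span_minimal[OF _ subspace_vecs]) (auto simp: lin_code_def schur_vecs subset_iff)

context
  fixes n :: nat and C :: "(nat \<Rightarrow> 'a::field) set" and P :: "nat set set"
  assumes sd: "self_dual n C" and bd: "block_decomp {..<n} C P"
  notes code = self_dual_lin_code[OF sd]
begin

lemma schur_square_block_sum_eq_0:
  assumes "y \<in> schur_square C" "B \<in> P"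
  shows "sum y B = 0"
proof -
  have "indicator B \<in> dual_code n (schur_square C)"
    using block_indicator_mem_stabilizer[OF code bd \<open>B \<in> P\<close>]
    by (simp add: dual_schur_square_eq_stabilizer[OF sd])
  then have "dotp n (indicator B) y = 0"
    using \<open>y \<in> schur_square C\<close> by (auto simp: dual_code_dotp dotp_def mult.commute)
  then show ?thesis
    using block_subset_lessThan[OF code bd \<open>B \<in> P\<close>] by (simp add: dotp_indicator)
qed

lemma dim_dual_schur_square_le_card_blocks:
  "fvec.dim (dual_code n (schur_square C)) \<le> card P"
proof -
  have "finite P"
    using block_decomp_splitting[OF code bd] by (simp add: splitting_partition_def)
  have "dual_code n (schur_square C) \<subseteq> fvec.span (indicator ` P)"
    using dual_schur_square_eq_stabilizer[OF sd]
      stabilizer_subset_span_block_indicators[OF code bd self_dual_full_support[OF sd]]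
    by simp
  then have "fvec.dim (dual_code n (schur_square C)) \<le> card (indicator ` P :: (nat \<Rightarrow> 'a) set)"
    using \<open>finite P\<close> by (intro fvec.dim_le_card) auto
  also have "\<dots> \<le> card P"
    using \<open>finite P\<close> by (rule card_image_le)
  finally show ?thesis .
qed

theorem dim_schur_square_add_card_blocks: "fvec.dim (schur_square C) + card P = n"
proof -
  have W: "fvec.subspace (schur_square C)" "schur_square C \<subseteq> vecs n"
    using schur_square_subset_vecs[OF code] by (simp_all add: schur_square_def)
  have "fvec.dim (schur_square C) + card P \<le> n"
    using W block_decomp_splitting[OF code bd] schur_square_block_sum_eq_0
    by (intro dim_add_card_le_if_block_sums_zero) (auto simp: splitting_partition_def)
  moreover have "n \<le> fvec.dim (schur_square C) + fvec.dim (dual_code n (schur_square C))"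
    using W by (rule dim_add_dim_dual_code_ge)
  ultimately show ?thesis
    using dim_dual_schur_square_le_card_blocks by linarith
qed

end

lemma nb_eq_card_blocks:
  assumes sd: "self_dual n C" and bd: "block_decomp {..<n} C P"
  shows "nb n C = card P"
  unfolding nb_def
proof (rule the_equality)
  show "\<exists>P'. block_decomp {..<n} C P' \<and> card P' = card P"
    using bd by blast
  fix m assume "\<exists>P'. block_decomp {..<n} C P' \<and> card P' = m"
  then obtain P' where P': "block_decomp {..<n} C P'" "card P' = m" by blast
  show "m = card P"
    using dim_schur_square_add_card_blocks[OF sd P'(1)] dim_schur_square_add_card_blocks[OF sd bd] P'(2)
    by simp
qed

theorem mainTheorem1:
  fixes C :: "(nat \<Rightarrow> 'a::field) set" and k :: nat
  assumes "k \<ge> 1" and "self_dual (2 * k) C"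
  shows "fvec.dim (schur_square C) = 2 * k - nb (2 * k) C"
proof -
  obtain P where P: "block_decomp {..<2 * k} C P"
    using block_decomp_exists[OF self_dual_lin_code[OF assms(2)]] assms(1) by force
  show ?thesis
    using dim_schur_square_add_card_blocks[OF assms(2) P] nb_eq_card_blocks[OF assms(2) P]
    by simp
qed

end
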